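(* Let $g$ be a prior density on $(0,\infty)$ and $\{F_\mu\}_{\mu>0}$ a family of non-negative reward distributions with $F_\mu$ having mean $\mu$, with $\lambda=\int_0^\infty E_\mu(X\mid X>0)g(\mu)\,d\mu<\infty$. Assume (A1): $g(\mu)\sim\alpha\mu^{\beta-1}$ as $\mu\to0$ for some $\alpha,\beta>0$; (A2): there is $a_1>0$ with $P_\mu(X>0)\ge a_1\min(\mu,1)$ for all $\mu>0$; and either (B1) or (B2), where $M_\mu(\theta)=E_\mu e^{\theta X}$ and: (B1) rewards are non-negative integer-valued; for every $0<\delta\le1$ there is $\theta_\delta>0$ with $M_\mu(\theta)\le e^{(1+\delta)\theta\mu}$ and $M_\mu(-\theta)\le e^{-(1-\delta)\theta\mu}$ for all $\mu>0$, $0\le\theta\le\theta_\delta$; $P_\mu(X>0)\le a_2\mu$ for some $a_2>0$; $E_\mu X^4=O(\mu)$ as $\mu\to0$; (B2) rewards are continuous with $\sup_{\mu>0}P_\mu(X\le\gamma\mu)\to0$ as $\gamma\to0$; $E_\mu X^4=O(\mu)$ as $\mu\to0$; for every $0<\delta\le1$ there is $\tau_\delta>0$ with $M_\mu(\theta)\le e^{(1+\delta)\theta\mu}$ and $M_\mu(-\theta)\le e^{-(1-\delta)\theta\mu}$ whenever $0<\theta\mu\le\tau_\delta$; and for each $t\ge1$ there is $\xi_t>0$ with $\sup_{\mu\le\xi_t}P_\mu(\hat\sigma_t^2\le\gamma\mu^2)\to0$ as $\gamma\to0$. Let $X_1,X_2,\ldots$ be i.i.d. $F_\mu$, $S_t=\sum_{u=1}^tX_u$,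 $\bar X_t=S_t/t$, $\hat\sigma_t^2=t^{-1}\sum_{u=1}^t(X_u-\bar X_t)^2$. Let $c_n\to\infty$ with $c_n=o(n^\delta)$ for all $\delta>0$, $\zeta_n\sim Cn^{-\frac1{\beta+1}}$ with $C=\big(\frac{\lambda\beta(\beta+1)}{\alpha}\big)^{\frac1{\beta+1}}$, $d_n=n^{-\omega}$ for some $0<\omega<\frac1{\beta+1}$, and $T_c=\inf\{t:S_t>t\zeta_n+c_n\hat\sigma_t\sqrt t\}$. Let $\epsilon>0$. Then as $n\to\infty$, $$\sup_{(1+\epsilon)\zeta_n\le\mu\le d_n}\big[\mu E_\mu(T_c\wedge n)\big]=O(c_n^3+\log n),\qquad E_g\big[(T_c\wedge n)\,\mu\,\mathbf 1_{\{(1+\epsilon)\zeta_n\le\mu\le d_n\}}\big]\to0,$$ where in the second expression $\mu\sim g$ and, given $\mu$, $T_c$ is computed from rewards i.i.d. $F_\mu$.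
   Context: $a\wedge b=\min(a,b)$. $E_\mu,P_\mu$ denote expectation/probability under $F_\mu$. *)

theory Defs
  imports "HOL-Probability.Probability" "HOL-Library.Landau_Symbols"
begin

text \<open>Rewards: a path omega :: nat => real, with X_u = omega u for u >= 1
  (coordinate 0 is unused).  The i.i.d. law under F mu is the infinite product.\<close>

definition iidM :: "(real \<Rightarrow> real measure) \<Rightarrow> real \<Rightarrow> (nat \<Rightarrow> real) measure" where
  "iidM F \<mu> = (\<Pi>\<^sub>M u\<in>(UNIV::nat set). F \<mu>)"

definition Ssum :: "(nat \<Rightarrow> real) \<Rightarrow> nat \<Rightarrow> real" where
  "Ssum \<omega> t = (\<Sum>u=1..t. \<omega> u)"

definition xbar :: "(nat \<Rightarrow> real) \<Rightarrow> nat \<Rightarrow> real" where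
  "xbar \<omega> t = Ssum \<omega> t / real t"

definition sigma2 :: "(nat \<Rightarrow> real) \<Rightarrow> nat \<Rightarrow> real" where
  "sigma2 \<omega> t = (\<Sum>u=1..t. (\<omega> u - xbar \<omega> t)\<^sup>2) / real t"

definition stop_cond :: "real \<Rightarrow> real \<Rightarrow> (nat \<Rightarrow> real) \<Rightarrow> nat \<Rightarrow> bool" where
  "stop_cond \<zeta> c \<omega> t \<longleftrightarrow> Ssum \<omega> t > real t * \<zeta> + c * sqrt (sigma2 \<omega> t) * sqrt (real t)"

definition Tc_min :: "real \<Rightarrow> real \<Rightarrow> nat \<Rightarrow> (nat \<Rightarrow> real) \<Rightarrow> nat" where
  "Tc_min \<zeta> c n \<omega> = (LEAST t. t = n \<or> (1 \<le> t \<and> stop_cond \<zeta> c \<omega> t))"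

definition ET :: "(real \<Rightarrow> real measure) \<Rightarrow> real \<Rightarrow> real \<Rightarrow> nat \<Rightarrow> real \<Rightarrow> real" where
  "ET F \<zeta> c n \<mu> = (\<integral>\<omega>. real (Tc_min \<zeta> c n \<omega>) \<partial>iidM F \<mu>)"

definition mgf :: "(real \<Rightarrow> real measure) \<Rightarrow> real \<Rightarrow> real \<Rightarrow> ennreal" where
  "mgf F \<mu> \<theta> = (\<integral>\<^sup>+x. ennreal (exp (\<theta> * x)) \<partial>F \<mu>)"

definition cond_mean :: "(real \<Rightarrow> real measure) \<Rightarrow> real \<Rightarrow> real" where
  "cond_mean F \<mu> = (\<integral>x. x * indicator {0<..} x \<partial>F \<mu>) / measure (F \<mu>) {0<..}"

definition fourth_moment :: "(real \<Rightarrow> real measure) \<Rightarrow> real \<Rightarrow> real" where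
  "fourth_moment F \<mu> = (\<integral>x. x ^ 4 \<partial>F \<mu>)"

end

theory Submission
  imports Defs
begin

(* Put t0 = ceil (c^2 / mu).  Then E (T_c /\ n) <= t0 + sum_{t0 <= t < n} P(no stop at t).
   If mu >= (1 + eps) zeta, not stopping at time t forces either S_t <= (1 - h) t mu or
   sum_{u <= t} X_u^2 >= (h t mu / c)^2, because t sigmahat_t^2 <= sum_{u <= t} X_u^2.
   The first event has probability at most exp (- h k mu t / 2) by a Chernoff bound from the
   lower mgf condition; the second has probability O(c^4 / (mu t)^2) by Markov's inequality
   for (sum X_u^2)^2, since E X^4 = O(mu).  Summing over t >= t0 gives
   mu E (T_c /\ n) = O(c^2) uniformly in (1 + eps) zeta_n <= mu <= d_n, whence the first
   claim; the second follows because g mu = O(mu^(beta - 1)) near 0 and c_n^2 d_n^beta -> 0. *)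

section \<open>The stopping rule on a fixed sample path\<close>

lemma Tc_min_le: "Tc_min \<zeta> c n \<omega> \<le> n"
  unfolding Tc_min_def by (rule Least_le) simp

lemma Tc_min_le_count_not_stop:
  assumes "1 \<le> t0"
  shows "real (Tc_min \<zeta> c n \<omega>) \<le> real t0 + (\<Sum>t\<in>{t0..<n}. indicator {\<omega>. \<not> stop_cond \<zeta> c \<omega> t} \<omega>)"
proof -
  define m where "m = Tc_min \<zeta> c n \<omega>"
  have not_stop: "\<not> stop_cond \<zeta> c \<omega> t" if "t0 \<le> t" "t < m" for t
    using not_less_Least[of t "\<lambda>t. t = n \<or> (1 \<le> t \<and> stop_cond \<zeta> c \<omega> t)"] that assms
    unfolding m_def Tc_min_def by auto
  have "{t0..<m} \<subseteq> {t\<in>{t0..<n}. \<not> stop_cond \<zeta> c \<omega> t}"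
    using not_stop Tc_min_le[of \<zeta> c n \<omega>] by (auto simp: m_def)
  then have "card {t0..<m} \<le> card {t\<in>{t0..<n}. \<not> stop_cond \<zeta> c \<omega> t}"
    by (intro card_mono) auto
  moreover have "(\<Sum>t\<in>{t0..<n}. indicator {\<omega>. \<not> stop_cond \<zeta> c \<omega> t} \<omega> :: real)
      = real (card {t\<in>{t0..<n}. \<not> stop_cond \<zeta> c \<omega> t})"
    by (simp add: indicator_def sum.If_cases Int_def conj_commute)
  ultimately show ?thesis
    unfolding m_def by simp
qed

lemma sum_sq_deviation_le_sum_sq:
  fixes a :: "nat \<Rightarrow> real"
  shows "(\<Sum>u=1..t. (a u - (\<Sum>v=1..t. a v) / real t)\<^sup>2) \<le> (\<Sum>u=1..t. (a u)\<^sup>2)"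
proof (cases "t = 0")
  case False
  define m where "m = (\<Sum>v=1..t. a v) / real t"
  have sum_eq: "(\<Sum>v=1..t. a v) = real t * m"
    using False m_def by simp
  have "(\<Sum>u=1..t. (a u - m)\<^sup>2) = (\<Sum>u=1..t. (a u)\<^sup>2 - 2 * m * a u + m\<^sup>2)"
    by (intro sum.cong) (auto simp: power2_eq_square algebra_simps)
  also have "\<dots> = (\<Sum>u=1..t. (a u)\<^sup>2) - 2 * m * (\<Sum>u=1..t. a u) + real t * m\<^sup>2"
    by (simp add: sum.distrib sum_subtractf sum_distrib_left)
  also have "\<dots> = (\<Sum>u=1..t. (a u)\<^sup>2) - real t * m\<^sup>2"
    unfolding sum_eq by (simp add: power2_eq_square)
  finally show ?thesis
    by (simp add: m_def)
qed simp

lemma not_stop_cond_imp_small_sum_or_large_squares: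
  assumes t: "1 \<le> t" and c: "0 < c" and h: "0 < h" and \<mu>: "0 < \<mu>"
    and \<zeta>: "\<zeta> \<le> (1 - 2 * h) * \<mu>" and not_stop: "\<not> stop_cond \<zeta> c \<omega> t"
  shows "Ssum \<omega> t \<le> (1 - h) * real t * \<mu> \<or> (h * real t * \<mu> / c)\<^sup>2 \<le> (\<Sum>u=1..t. (\<omega> u)\<^sup>2)"
proof (rule ccontr)
  assume "\<not> ?thesis"
  then have sum: "(1 - h) * real t * \<mu> < Ssum \<omega> t"
    and squares: "(\<Sum>u=1..t. (\<omega> u)\<^sup>2) < (h * real t * \<mu> / c)\<^sup>2"
    by auto
  have "sqrt (sigma2 \<omega> t) * sqrt (real t) = sqrt (\<Sum>u=1..t. (\<omega> u - xbar \<omega> t)\<^sup>2)"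
    using t by (simp add: sigma2_def real_sqrt_mult[symmetric])
  also have "\<dots> \<le> sqrt (\<Sum>u=1..t. (\<omega> u)\<^sup>2)"
    unfolding xbar_def Ssum_def by (intro real_sqrt_le_mono sum_sq_deviation_le_sum_sq)
  also have "\<dots> < h * real t * \<mu> / c"
    using squares h \<mu> c t by (intro real_less_lsqrt) auto
  finally have "c * sqrt (sigma2 \<omega> t) * sqrt (real t) < h * real t * \<mu>"
    using c by (simp add: field_simps)
  moreover have "real t * \<zeta> \<le> real t * ((1 - 2 * h) * \<mu>)"
    using \<zeta> by (simp add: mult_left_mono)
  ultimately show False
    using sum not_stop unfolding stop_cond_def by (simp add: algebra_simps)
qed

lemma sum_inverse_squares_le:
  assumes "1 \<le> t0"
  shows "(\<Sum>t\<in>{t0..<n}. 1 / (real t)\<^sup>2) \<le> 2 / real t0"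
proof -
  have telescope: "(\<Sum>t\<in>{t0..<n}. 1 / (real t)\<^sup>2) \<le> 2 / real t0 - 2 / real n" if "t0 \<le> n"
    using that
  proof (induction n rule: dec_induct)
    case (step m)
    have m: "1 \<le> real m"
      using step assms by simp
    have "1 / (real m)\<^sup>2 = 2 / (2 * (real m)\<^sup>2)"
      by simp
    also have "\<dots> \<le> 2 / (real m * (real m + 1))"
      using m by (intro divide_left_mono) (auto simp: power2_eq_square)
    also have "\<dots> = 2 / real m - 2 / real (Suc m)"
      using m by (simp add: field_simps)
    finally show ?case
      using step by simp
  qed simp
  show ?thesis
    using telescope by (cases "t0 \<le> n") (auto intro: order_trans[of _ "2 / real t0 - 2 / real n"])
qed

lemma sum_exp_neg_le:
  assumes a: "0 < a"
  shows "(\<Sum>t\<in>{t0..<n}. exp (- a * real t)) \<le> 1 + 1 / a"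
proof -
  define q where "q = exp (- a)"
  have q: "0 < q" "q < 1"
    using a by (auto simp: q_def)
  have "(\<Sum>t\<in>{t0..<n}. exp (- a * real t)) \<le> (\<Sum>t<n. exp (- a * real t))"
    by (rule sum_mono2) auto
  also have "\<dots> = (\<Sum>t<n. q ^ t)"
    by (simp add: q_def exp_of_nat_mult[symmetric] mult.commute)
  also have "\<dots> = (1 - q ^ n) / (1 - q)"
    using q by (simp add: sum_gp_strict)
  also have "\<dots> \<le> 1 / (1 - q)"
    using q by (intro divide_right_mono) auto
  also have "\<dots> \<le> 1 + 1 / a"
  proof -
    have "q * (1 + a) \<le> 1"
      using a exp_ge_add_one_self[of a] by (simp add: q_def exp_minus field_simps)
    then show ?thesis
      using a q by (simp add: field_simps)
  qed
  finally show ?thesis .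
qed

lemma nn_integral_powr_Icc_le:
  fixes \<beta> a b :: real
  assumes \<beta>: "0 < \<beta>" and a: "0 < a"
  shows "(\<integral>\<^sup>+x. ennreal (x powr (\<beta> - 1)) * indicator {a..b} x \<partial>lborel) \<le> ennreal (b powr \<beta> / \<beta>)"
proof (cases "a \<le> b")
  case True
  have "(\<integral>\<^sup>+x. ennreal (x powr (\<beta> - 1)) * indicator {a..b} x \<partial>lborel)
      = ennreal (b powr \<beta> / \<beta> - a powr \<beta> / \<beta>)"
  proof (rule nn_integral_FTC_Icc)
    fix x assume "x \<in> {a..b}"
    then have "0 < x"
      using a by simp
    then show "((\<lambda>x. x powr \<beta> / \<beta>) has_real_derivative x powr (\<beta> - 1)) (at x)"
      using \<beta> by (auto intro!: derivative_eq_intros)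
  qed (use True in auto)
  also have "\<dots> \<le> ennreal (b powr \<beta> / \<beta>)"
    using \<beta> by (intro ennreal_leI) simp
  finally show ?thesis .
qed simp

lemma nn_integral_Icc_le_powr:
  fixes h :: "real \<Rightarrow> real"
  assumes "0 < \<beta>" and "0 < a" and "0 \<le> L" and bound: "\<forall>\<mu>\<in>{a..b}. h \<mu> \<le> L * \<mu> powr (\<beta> - 1)"
  shows "(\<integral>\<^sup>+\<mu>. ennreal (indicator {a..b} \<mu> * h \<mu>) \<partial>lborel) \<le> ennreal (L * (b powr \<beta> / \<beta>))"
proof -
  have "(\<integral>\<^sup>+\<mu>. ennreal (indicator {a..b} \<mu> * h \<mu>) \<partial>lborel)
      \<le> (\<integral>\<^sup>+\<mu>. ennreal L * (ennreal (\<mu> powr (\<beta> - 1)) * indicator {a..b} \<mu>) \<partial>lborel)"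
    using bound \<open>0 \<le> L\<close> by (intro nn_integral_mono) (auto simp: indicator_def ennreal_mult'[symmetric] ennreal_leI)
  also have "\<dots> = ennreal L * (\<integral>\<^sup>+\<mu>. ennreal (\<mu> powr (\<beta> - 1)) * indicator {a..b} \<mu> \<partial>lborel)"
    by (rule nn_integral_cmult) measurable
  also have "\<dots> \<le> ennreal L * ennreal (b powr \<beta> / \<beta>)"
    using assms(1,2) by (intro mult_left_mono nn_integral_powr_Icc_le) auto
  finally show ?thesis
    using assms(1,3) by (simp add: ennreal_mult'[symmetric])
qed

section \<open>Tail bounds for i.i.d. sequences\<close>

locale iid_real = prob_space M for M :: "real measure" +
  assumes sets_M: "sets M = sets borel"
begin

abbreviation paths :: "(nat \<Rightarrow> real) measure" where
  "paths \<equiv> \<Pi>\<^sub>M u\<in>(UNIV::nat set). M"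

sublocale paths: prob_space paths
  by (rule prob_space_PiM) (rule prob_space_axioms)

lemma measurable_M_eq_borel: "measurable M N = measurable borel N"
  by (rule measurable_cong_sets[OF sets_M refl])

lemma space_paths [simp]: "space paths = UNIV"
  using sets_eq_imp_space_eq[OF sets_M] by (auto simp: space_PiM PiE_def extensional_def)

lemma measurable_coordinate [measurable]: "(\<lambda>\<omega>. \<omega> u) \<in> borel_measurable paths"
  using measurable_component_singleton[of u UNIV "\<lambda>_. M"] measurable_cong_sets[OF refl sets_M]
  by blast

lemma events_Collect: "Measurable.pred paths P \<Longrightarrow> {\<omega>. P \<omega>} \<in> paths.events"
  by (simp add: pred_def)

lemma nn_integral_prod_coordinates:
  assumes "finite J" and "\<And>i. i \<in> J \<Longrightarrow> f i \<in> borel_measurable borel"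
  shows "(\<integral>\<^sup>+\<omega>. (\<Prod>i\<in>J. f i (\<omega> i)) \<partial>paths) = (\<Prod>i\<in>J. \<integral>\<^sup>+x. f i x \<partial>M)"
proof -
  interpret product_prob_space "\<lambda>_::nat. M" UNIV
    by unfold_locales
  have [measurable]: "(\<lambda>y. \<Prod>i\<in>J. f i (y i)) \<in> borel_measurable (\<Pi>\<^sub>M u\<in>J. M)"
    using assms(2) by (intro borel_measurable_prod_ennreal)
      (auto intro!: measurable_compose[OF measurable_component_singleton] simp: measurable_M_eq_borel)
  have "(\<integral>\<^sup>+\<omega>. (\<Prod>i\<in>J. f i (\<omega> i)) \<partial>paths) = (\<integral>\<^sup>+\<omega>. (\<Prod>i\<in>J. f i (restrict \<omega> J i)) \<partial>paths)"
    by (intro nn_integral_cong prod.cong) auto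
  also have "\<dots> = (\<integral>\<^sup>+y. (\<Prod>i\<in>J. f i (y i)) \<partial>distr paths (\<Pi>\<^sub>M u\<in>J. M) (\<lambda>x. restrict x J))"
    by (subst nn_integral_distr) auto
  also have "\<dots> = (\<integral>\<^sup>+y. (\<Prod>i\<in>J. f i (y i)) \<partial>(\<Pi>\<^sub>M u\<in>J. M))"
    using assms(1) by (subst distr_PiM_restrict_finite) auto
  also have "\<dots> = (\<Prod>i\<in>J. \<integral>\<^sup>+x. f i x \<partial>M)"
    using assms by (subst product_nn_integral_prod) (auto simp: measurable_M_eq_borel)
  finally show ?thesis .
qed

lemma prob_Ssum_le:
  assumes "0 < \<theta>" and "0 \<le> r"
    and mgf: "(\<integral>\<^sup>+x. ennreal (exp (- \<theta> * x)) \<partial>M) \<le> ennreal r"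
  shows "paths.prob {\<omega>. Ssum \<omega> t \<le> b} \<le> exp (\<theta> * b) * r ^ t"
proof -
  have "(\<integral>\<^sup>+\<omega>. ennreal (exp (- \<theta> * Ssum \<omega> t)) \<partial>paths)
      = (\<integral>\<^sup>+\<omega>. (\<Prod>u\<in>{1..t}. ennreal (exp (- \<theta> * \<omega> u))) \<partial>paths)"
    by (simp add: Ssum_def sum_distrib_left exp_sum prod_ennreal)
  also have "\<dots> = (\<integral>\<^sup>+x. ennreal (exp (- \<theta> * x)) \<partial>M) ^ t"
    by (subst nn_integral_prod_coordinates) auto
  also have "\<dots> \<le> ennreal (r ^ t)"
    using power_mono[OF mgf, of t] assms(2) by (simp add: ennreal_power)
  finally have mgf_Ssum: "(\<integral>\<^sup>+\<omega>. ennreal (exp (- \<theta> * Ssum \<omega> t)) \<partial>paths) \<le> ennreal (r ^ t)" .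
  have "emeasure paths {\<omega>. Ssum \<omega> t \<le> b}
      \<le> ennreal (exp (\<theta> * b)) * (\<integral>\<^sup>+\<omega>. ennreal (exp (- \<theta> * Ssum \<omega> t)) \<partial>paths)"
    using Chernoff_ineq_nn_integral_le[of \<theta> UNIV paths "\<lambda>\<omega>. Ssum \<omega> t" b] assms(1) sets.top[of paths]
    unfolding Ssum_def by simp
  also have "\<dots> \<le> ennreal (exp (\<theta> * b)) * ennreal (r ^ t)"
    by (rule mult_left_mono[OF mgf_Ssum]) simp
  finally show ?thesis
    using assms(2) by (simp add: paths.emeasure_eq_measure ennreal_mult'[symmetric] ennreal_le_iff)
qed

lemma nn_integral_sq_sum_squares_le:
  assumes "0 \<le> a4" "0 \<le> a2"
    and E4: "(\<integral>\<^sup>+x. ennreal (x ^ 4) \<partial>M) \<le> ennreal a4"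
    and E2: "(\<integral>\<^sup>+x. ennreal (x\<^sup>2) \<partial>M) \<le> ennreal a2"
  shows "(\<integral>\<^sup>+\<omega>. ennreal ((\<Sum>u=1..t. (\<omega> u)\<^sup>2)\<^sup>2) \<partial>paths)
    \<le> ennreal (real t * a4 + (real t)\<^sup>2 * a2\<^sup>2)"
proof -
  have cross: "(\<integral>\<^sup>+\<omega>. ennreal ((\<omega> u)\<^sup>2 * (\<omega> v)\<^sup>2) \<partial>paths) \<le> ennreal ((if u = v then a4 else 0) + a2\<^sup>2)"
    for u v
  proof (cases "u = v")
    case True
    have "(\<integral>\<^sup>+\<omega>. ennreal ((\<omega> u)\<^sup>2 * (\<omega> v)\<^sup>2) \<partial>paths) = (\<integral>\<^sup>+\<omega>. (\<Prod>i\<in>{u}. ennreal ((\<omega> i) ^ 4)) \<partial>paths)"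
      using True by (simp add: power2_eq_square power4_eq_xxxx mult.assoc)
    also have "\<dots> = (\<integral>\<^sup>+x. ennreal (x ^ 4) \<partial>M)"
      by (subst nn_integral_prod_coordinates) auto
    also have "\<dots> \<le> ennreal ((if u = v then a4 else 0) + a2\<^sup>2)"
      using E4 True by (simp add: order_trans[OF _ ennreal_leI])
    finally show ?thesis .
  next
    case False
    have "(\<integral>\<^sup>+\<omega>. ennreal ((\<omega> u)\<^sup>2 * (\<omega> v)\<^sup>2) \<partial>paths) = (\<integral>\<^sup>+\<omega>. (\<Prod>i\<in>{u, v}. ennreal ((\<omega> i)\<^sup>2)) \<partial>paths)"
      using False by (simp add: ennreal_mult)
    also have "\<dots> = (\<integral>\<^sup>+x. ennreal (x\<^sup>2) \<partial>M) ^ 2"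
      using False by (subst nn_integral_prod_coordinates) (auto simp: power2_eq_square)
    also have "\<dots> \<le> ennreal (a2\<^sup>2)"
      using power_mono[OF E2, of 2] assms(2) by (simp add: ennreal_power)
    also have "\<dots> \<le> ennreal ((if u = v then a4 else 0) + a2\<^sup>2)"
      using assms(1) by (intro ennreal_leI) simp
    finally show ?thesis .
  qed
  have "(\<integral>\<^sup>+\<omega>. ennreal ((\<Sum>u=1..t. (\<omega> u)\<^sup>2)\<^sup>2) \<partial>paths)
      = (\<integral>\<^sup>+\<omega>. (\<Sum>u\<in>{1..t}. \<Sum>v\<in>{1..t}. ennreal ((\<omega> u)\<^sup>2 * (\<omega> v)\<^sup>2)) \<partial>paths)"
    by (simp add: power2_eq_square[of "sum _ _"] sum_product sum_nonneg)
  also have "\<dots> = (\<Sum>u\<in>{1..t}. \<Sum>v\<in>{1..t}. \<integral>\<^sup>+\<omega>. ennreal ((\<omega> u)\<^sup>2 * (\<omega> v)\<^sup>2) \<partial>paths)"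
    by (simp add: nn_integral_sum del: sum_ennreal)
  also have "\<dots> \<le> (\<Sum>u\<in>{1..t}. \<Sum>v\<in>{1..t}. ennreal ((if u = v then a4 else 0) + a2\<^sup>2))"
    by (intro sum_mono cross)
  also have "\<dots> = (\<Sum>u\<in>{1..t}. ennreal (\<Sum>v\<in>{1..t}. (if u = v then a4 else 0) + a2\<^sup>2))"
    using assms(1) by (intro sum.cong refl sum_ennreal) auto
  also have "\<dots> = ennreal (\<Sum>u\<in>{1..t}. \<Sum>v\<in>{1..t}. (if u = v then a4 else 0) + a2\<^sup>2)"
    using assms(1) by (intro sum_ennreal sum_nonneg) auto
  also have "(\<Sum>u\<in>{1..t}. \<Sum>v\<in>{1..t}. (if u = v then a4 else 0) + a2\<^sup>2) = real t * a4 + (real t)\<^sup>2 * a2\<^sup>2"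
    by (simp add: sum.distrib power2_eq_square algebra_simps)
  finally show ?thesis .
qed

lemma prob_sum_squares_ge_le:
  assumes s: "0 < s" and "0 \<le> a4" "0 \<le> a2"
    and E4: "(\<integral>\<^sup>+x. ennreal (x ^ 4) \<partial>M) \<le> ennreal a4"
    and E2: "(\<integral>\<^sup>+x. ennreal (x\<^sup>2) \<partial>M) \<le> ennreal a2"
  shows "paths.prob {\<omega>. s \<le> (\<Sum>u=1..t. (\<omega> u)\<^sup>2)} \<le> (real t * a4 + (real t)\<^sup>2 * a2\<^sup>2) / s\<^sup>2"
proof -
  let ?Q = "\<lambda>\<omega>. \<Sum>u=1..t. (\<omega> u)\<^sup>2"
  have "{\<omega>. s \<le> ?Q \<omega>} \<subseteq> {\<omega>\<in>space paths. 1 \<le> ennreal (1 / s\<^sup>2) * ennreal ((?Q \<omega>)\<^sup>2)}"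
  proof (safe, simp)
    fix \<omega> assume "s \<le> ?Q \<omega>"
    then have "s\<^sup>2 \<le> (?Q \<omega>)\<^sup>2"
      using s by (intro power_mono) auto
    then show "1 \<le> ennreal (1 / s\<^sup>2) * ennreal ((?Q \<omega>)\<^sup>2)"
      using s by (simp add: ennreal_mult'[symmetric] field_simps)
  qed
  then have "emeasure paths {\<omega>. s \<le> ?Q \<omega>}
      \<le> emeasure paths {\<omega>\<in>space paths. 1 \<le> ennreal (1 / s\<^sup>2) * ennreal ((?Q \<omega>)\<^sup>2)}"
    by (intro emeasure_mono) measurable
  also have "\<dots> \<le> ennreal (1 / s\<^sup>2) * (\<integral>\<^sup>+\<omega>. ennreal ((?Q \<omega>)\<^sup>2) \<partial>paths)"
    using nn_integral_Markov_inequality[of "\<lambda>\<omega>. ennreal ((?Q \<omega>)\<^sup>2)" "space paths" paths] sets.top[of paths]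
    by simp
  also have "\<dots> \<le> ennreal (1 / s\<^sup>2) * ennreal (real t * a4 + (real t)\<^sup>2 * a2\<^sup>2)"
    by (intro mult_left_mono nn_integral_sq_sum_squares_le assms) simp
  also have "\<dots> = ennreal ((real t * a4 + (real t)\<^sup>2 * a2\<^sup>2) / s\<^sup>2)"
    by (subst ennreal_mult'[symmetric]) simp_all
  finally show ?thesis
    using assms(2,3) by (metis paths.emeasure_eq_measure ennreal_le_iff zero_le_power2
        add_nonneg_nonneg mult_nonneg_nonneg of_nat_0_le_iff divide_nonneg_nonneg)
qed

lemma prob_Ssum_below_mean_le:
  assumes "0 < \<theta>"
    and mgf: "(\<integral>\<^sup>+x. ennreal (exp (- \<theta> * x)) \<partial>M) \<le> ennreal (exp (- (1 - h / 2) * \<theta> * \<mu>))"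
  shows "paths.prob {\<omega>. Ssum \<omega> t \<le> (1 - h) * real t * \<mu>} \<le> exp (- (h * \<theta> * \<mu> / 2) * real t)"
proof -
  have "paths.prob {\<omega>. Ssum \<omega> t \<le> (1 - h) * real t * \<mu>}
      \<le> exp (\<theta> * ((1 - h) * real t * \<mu>)) * exp (- (1 - h / 2) * \<theta> * \<mu>) ^ t"
    by (rule prob_Ssum_le[OF assms(1) _ mgf]) simp
  also have "\<dots> = exp (- (h * \<theta> * \<mu> / 2) * real t)"
    by (simp add: exp_of_nat_mult[symmetric] exp_add[symmetric] algebra_simps)
  finally show ?thesis .
qed

lemma prob_sum_squares_large_le:
  assumes h: "0 < h" and c: "0 < c" and \<mu>: "0 < \<mu>" and t\<mu>: "1 \<le> real t * \<mu>"
    and K: "0 \<le> K" "0 \<le> K2"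
    and E4: "(\<integral>\<^sup>+x. ennreal (x ^ 4) \<partial>M) \<le> ennreal (K * \<mu>)"
    and E2: "(\<integral>\<^sup>+x. ennreal (x\<^sup>2) \<partial>M) \<le> ennreal (K2 * \<mu>)"
  shows "paths.prob {\<omega>. (h * real t * \<mu> / c)\<^sup>2 \<le> (\<Sum>u=1..t. (\<omega> u)\<^sup>2)}
    \<le> (K + K2\<^sup>2) * c ^ 4 / (h ^ 4 * \<mu>\<^sup>2) / (real t)\<^sup>2"
proof -
  have t: "0 < real t"
    using t\<mu> \<mu> by (auto intro: ccontr)
  have "paths.prob {\<omega>. (h * real t * \<mu> / c)\<^sup>2 \<le> (\<Sum>u=1..t. (\<omega> u)\<^sup>2)}
      \<le> (real t * (K * \<mu>) + (real t)\<^sup>2 * (K2 * \<mu>)\<^sup>2) / ((h * real t * \<mu> / c)\<^sup>2)\<^sup>2"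
    using h c \<mu> t K by (intro prob_sum_squares_ge_le E4 E2) auto
  also have "\<dots> \<le> (real t * \<mu>)\<^sup>2 * (K + K2\<^sup>2) / ((h * real t * \<mu> / c)\<^sup>2)\<^sup>2"
  proof (intro divide_right_mono)
    have "real t * \<mu> * K \<le> (real t * \<mu>) * (real t * \<mu>) * K"
      using t\<mu> K by (intro mult_right_mono) (simp_all add: mult_le_cancel_left1)
    then show "real t * (K * \<mu>) + (real t)\<^sup>2 * (K2 * \<mu>)\<^sup>2 \<le> (real t * \<mu>)\<^sup>2 * (K + K2\<^sup>2)"
      by (simp add: power2_eq_square algebra_simps)
  qed simp
  also have "\<dots> = (K + K2\<^sup>2) * c ^ 4 / (h ^ 4 * \<mu>\<^sup>2) / (real t)\<^sup>2"
    using h c \<mu> t by (simp add: field_simps power2_eq_square power4_eq_xxxx)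
  finally show ?thesis .
qed

lemma integral_Tc_min_le:
  assumes "1 \<le> t0"
  shows "(\<integral>\<omega>. real (Tc_min \<zeta> c n \<omega>) \<partial>paths)
    \<le> real t0 + (\<Sum>t\<in>{t0..<n}. paths.prob {\<omega>. \<not> stop_cond \<zeta> c \<omega> t})"
proof -
  let ?N = "\<lambda>t. {\<omega>. \<not> stop_cond \<zeta> c \<omega> t}"
  let ?G = "\<lambda>\<omega>. real t0 + (\<Sum>t\<in>{t0..<n}. indicator (?N t) \<omega>)"
  have N_events: "?N t \<in> paths.events" for t
    by (intro events_Collect) (unfold stop_cond_def sigma2_def xbar_def Ssum_def, measurable)
  then have integrable_G: "integrable paths ?G"
    by (auto simp: less_top[symmetric])
  have "(\<integral>\<omega>. real (Tc_min \<zeta> c n \<omega>) \<partial>paths) \<le> (\<integral>\<omega>. ?G \<omega> \<partial>paths)"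
  proof (cases "integrable paths (\<lambda>\<omega>. real (Tc_min \<zeta> c n \<omega>))")
    case True
    then show ?thesis
      using integrable_G Tc_min_le_count_not_stop[OF assms] by (intro integral_mono) auto
  next
    case False
    then show ?thesis
      by (simp add: not_integrable_integral_eq sum_nonneg)
  qed
  also have "(\<integral>\<omega>. ?G \<omega> \<partial>paths) = real t0 + (\<Sum>t\<in>{t0..<n}. paths.prob (?N t))"
    using N_events paths.prob_space by (simp add: less_top[symmetric])
  finally show ?thesis .
qed

lemma prob_not_stop_le:
  assumes "1 \<le> t" and "0 < c" and "0 < h" and "0 < \<mu>" and "\<zeta> \<le> (1 - 2 * h) * \<mu>"
  shows "paths.prob {\<omega>. \<not> stop_cond \<zeta> c \<omega> t}
    \<le> paths.prob {\<omega>. Ssum \<omega> t \<le> (1 - h) * real t * \<mu>}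
      + paths.prob {\<omega>. (h * real t * \<mu> / c)\<^sup>2 \<le> (\<Sum>u=1..t. (\<omega> u)\<^sup>2)}"
proof -
  let ?A = "{\<omega>. Ssum \<omega> t \<le> (1 - h) * real t * \<mu>}"
  let ?B = "{\<omega>. (h * real t * \<mu> / c)\<^sup>2 \<le> (\<Sum>u=1..t. (\<omega> u)\<^sup>2)}"
  have events: "?A \<in> paths.events" "?B \<in> paths.events"
    unfolding Ssum_def by (intro events_Collect, measurable)+
  have "{\<omega>. \<not> stop_cond \<zeta> c \<omega> t} \<subseteq> ?A \<union> ?B"
    using not_stop_cond_imp_small_sum_or_large_squares[OF assms(1-5)] by auto
  then have "paths.prob {\<omega>. \<not> stop_cond \<zeta> c \<omega> t} \<le> paths.prob (?A \<union> ?B)"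
    using events by (intro paths.finite_measure_mono) auto
  also have "\<dots> \<le> paths.prob ?A + paths.prob ?B"
    using events by (rule measure_Un_le)
  finally show ?thesis .
qed

lemma sum_prob_Ssum_below_mean_le:
  assumes h: "0 < h" and \<mu>: "0 < \<mu>" and \<theta>: "0 < k" "k \<le> \<theta>"
    and mgf: "(\<integral>\<^sup>+x. ennreal (exp (- \<theta> * x)) \<partial>M) \<le> ennreal (exp (- (1 - h / 2) * \<theta> * \<mu>))"
  shows "(\<Sum>t\<in>{t0..<n}. paths.prob {\<omega>. Ssum \<omega> t \<le> (1 - h) * real t * \<mu>}) \<le> 1 + 2 / (h * k * \<mu>)"
proof -
  have "(\<Sum>t\<in>{t0..<n}. paths.prob {\<omega>. Ssum \<omega> t \<le> (1 - h) * real t * \<mu>})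
      \<le> (\<Sum>t\<in>{t0..<n}. exp (- (h * k * \<mu> / 2) * real t))"
  proof (intro sum_mono)
    fix t
    have "paths.prob {\<omega>. Ssum \<omega> t \<le> (1 - h) * real t * \<mu>} \<le> exp (- (h * \<theta> * \<mu> / 2) * real t)"
      using \<theta> by (intro prob_Ssum_below_mean_le mgf) simp
    also have "\<dots> \<le> exp (- (h * k * \<mu> / 2) * real t)"
      using h \<theta> \<mu> by (simp add: mult_right_mono)
    finally show "paths.prob {\<omega>. Ssum \<omega> t \<le> (1 - h) * real t * \<mu>} \<le> exp (- (h * k * \<mu> / 2) * real t)" .
  qed
  also have "\<dots> \<le> 1 + 2 / (h * k * \<mu>)"
    using sum_exp_neg_le[of "h * k * \<mu> / 2"] h \<theta> \<mu> by simp
  finally show ?thesis .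
qed

lemma sum_prob_sum_squares_large_le:
  assumes h: "0 < h" and c: "1 \<le> c" and \<mu>: "0 < \<mu>" and t0: "1 \<le> t0" "c\<^sup>2 / \<mu> \<le> real t0"
    and K: "0 \<le> K" "0 \<le> K2"
    and E4: "(\<integral>\<^sup>+x. ennreal (x ^ 4) \<partial>M) \<le> ennreal (K * \<mu>)"
    and E2: "(\<integral>\<^sup>+x. ennreal (x\<^sup>2) \<partial>M) \<le> ennreal (K2 * \<mu>)"
  shows "(\<Sum>t\<in>{t0..<n}. paths.prob {\<omega>. (h * real t * \<mu> / c)\<^sup>2 \<le> (\<Sum>u=1..t. (\<omega> u)\<^sup>2)})
    \<le> 2 * (K + K2\<^sup>2) * c\<^sup>2 / (h ^ 4 * \<mu>)"
proof -
  define D where "D = (K + K2\<^sup>2) * c ^ 4 / (h ^ 4 * \<mu>\<^sup>2)"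
  have c2: "1 \<le> c\<^sup>2"
    using c by (simp add: one_le_power)
  have c2\<mu>: "0 < c\<^sup>2 / \<mu>"
    using c2 \<mu> by (intro divide_pos_pos) auto
  have t\<mu>: "1 \<le> real t * \<mu>" if "t0 \<le> t" for t
  proof -
    have "c\<^sup>2 \<le> real t0 * \<mu>"
      using t0 \<mu> by (simp add: field_simps)
    also have "\<dots> \<le> real t * \<mu>"
      using that \<mu> by (intro mult_right_mono) auto
    finally show ?thesis
      using c2 by simp
  qed
  have "(\<Sum>t\<in>{t0..<n}. paths.prob {\<omega>. (h * real t * \<mu> / c)\<^sup>2 \<le> (\<Sum>u=1..t. (\<omega> u)\<^sup>2)})
      \<le> (\<Sum>t\<in>{t0..<n}. D / (real t)\<^sup>2)"
    unfolding D_def using h c \<mu> K t\<mu> by (intro sum_mono prob_sum_squares_large_le E4 E2) auto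
  also have "\<dots> = D * (\<Sum>t\<in>{t0..<n}. 1 / (real t)\<^sup>2)"
    by (simp add: sum_distrib_left)
  also have "\<dots> \<le> D * (2 / real t0)"
    using K by (intro mult_left_mono sum_inverse_squares_le t0) (simp add: D_def)
  also have "\<dots> \<le> D * (2 / (c\<^sup>2 / \<mu>))"
    using t0 c2\<mu> K mult_pos_pos[OF order.strict_trans2[OF c2\<mu> t0(2)] c2\<mu>]
    by (intro mult_left_mono divide_left_mono) (auto simp: D_def)
  also have "\<dots> = 2 * (K + K2\<^sup>2) * c\<^sup>2 / (h ^ 4 * \<mu>)"
    using \<mu> c h by (simp add: D_def field_simps power2_eq_square power4_eq_xxxx)
  finally show ?thesis .
qed

lemma mu_integral_Tc_min_le:
  assumes \<mu>: "0 < \<mu>" "\<mu> \<le> 1" and h: "0 < h" and c: "1 \<le> c" and \<zeta>: "\<zeta> \<le> (1 - 2 * h) * \<mu>"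
    and \<theta>: "0 < k" "k \<le> \<theta>"
    and mgf: "(\<integral>\<^sup>+x. ennreal (exp (- \<theta> * x)) \<partial>M) \<le> ennreal (exp (- (1 - h / 2) * \<theta> * \<mu>))"
    and K: "0 \<le> K" "0 \<le> K2"
    and E4: "(\<integral>\<^sup>+x. ennreal (x ^ 4) \<partial>M) \<le> ennreal (K * \<mu>)"
    and E2: "(\<integral>\<^sup>+x. ennreal (x\<^sup>2) \<partial>M) \<le> ennreal (K2 * \<mu>)"
  shows "\<mu> * (\<integral>\<omega>. real (Tc_min \<zeta> c n \<omega>) \<partial>paths) \<le> c\<^sup>2 * (3 + 2 / (h * k) + 2 * (K + K2\<^sup>2) / h ^ 4)"
proof -
  define t0 where "t0 = nat \<lceil>c\<^sup>2 / \<mu>\<rceil>"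
  have c2: "1 \<le> c\<^sup>2"
    using c by (simp add: one_le_power)
  have "real t0 = of_int \<lceil>c\<^sup>2 / \<mu>\<rceil>"
    using \<mu> by (simp add: t0_def)
  then have t0_ge: "c\<^sup>2 / \<mu> \<le> real t0" and t0_le: "real t0 \<le> c\<^sup>2 / \<mu> + 1"
    by linarith+
  moreover have "0 < c\<^sup>2 / \<mu>"
    using c2 \<mu> by (intro divide_pos_pos) auto
  ultimately have t0: "1 \<le> t0"
    by (simp add: Suc_le_eq)
  let ?A = "\<lambda>t. paths.prob {\<omega>. Ssum \<omega> t \<le> (1 - h) * real t * \<mu>}"
  let ?B = "\<lambda>t. paths.prob {\<omega>. (h * real t * \<mu> / c)\<^sup>2 \<le> (\<Sum>u=1..t. (\<omega> u)\<^sup>2)}"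
  have "(\<Sum>t\<in>{t0..<n}. paths.prob {\<omega>. \<not> stop_cond \<zeta> c \<omega> t}) \<le> (\<Sum>t\<in>{t0..<n}. ?A t) + (\<Sum>t\<in>{t0..<n}. ?B t)"
    unfolding sum.distrib[symmetric] using t0 c h \<mu> \<zeta> by (intro sum_mono prob_not_stop_le) auto
  then have "\<mu> * (\<integral>\<omega>. real (Tc_min \<zeta> c n \<omega>) \<partial>paths)
      \<le> \<mu> * (real t0 + (\<Sum>t\<in>{t0..<n}. ?A t) + (\<Sum>t\<in>{t0..<n}. ?B t))"
    using integral_Tc_min_le[OF t0, of \<zeta> c n] \<mu> by (intro mult_left_mono) auto
  also have "\<dots> \<le> \<mu> * ((c\<^sup>2 / \<mu> + 1) + (1 + 2 / (h * k * \<mu>)) + 2 * (K + K2\<^sup>2) * c\<^sup>2 / (h ^ 4 * \<mu>))"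
    using t0_le sum_prob_Ssum_below_mean_le[OF h \<mu>(1) \<theta> mgf]
      sum_prob_sum_squares_large_le[OF h c \<mu>(1) t0 t0_ge K E4 E2] \<mu>
    by (intro mult_left_mono add_mono) auto
  also have "\<dots> = c\<^sup>2 + 2 * \<mu> + 2 / (h * k) + 2 * (K + K2\<^sup>2) * c\<^sup>2 / h ^ 4"
    using \<mu> h \<theta> by (simp add: field_simps)
  also have "\<dots> \<le> c\<^sup>2 * (3 + 2 / (h * k) + 2 * (K + K2\<^sup>2) / h ^ 4)"
    using \<mu> c2 h \<theta> mult_right_mono[OF c2, of "2 / (h * k)"] by (simp add: algebra_simps)
  finally show ?thesis .
qed

end

section \<open>A uniform bound on \<open>\<mu> E\<^sub>\<mu>(T\<^sub>c \<and> n)\<close>\<close>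

text \<open>Under (B2) the bound is only available for \<open>\<theta> \<mu> \<le> \<tau>\<^sub>\<delta>\<close>; taking \<open>\<theta> = \<tau>\<^sub>\<delta> / \<mu>\<close>
  still gives \<open>\<theta> \<ge> \<tau>\<^sub>\<delta>\<close> as long as \<open>\<mu> \<le> 1\<close>.\<close>
lemma uniform_lower_mgf:
  fixes F :: "real \<Rightarrow> real measure"
  assumes \<delta>: "0 < \<delta>" "\<delta> \<le> 1"
    and B: "(\<forall>\<delta>. 0 < \<delta> \<and> \<delta> \<le> 1 \<longrightarrow> (\<exists>thd>0. \<forall>\<mu>>0. \<forall>\<theta>. 0 \<le> \<theta> \<and> \<theta> \<le> thd \<longrightarrow>
                   mgf F \<mu> \<theta> \<le> ennreal (exp ((1 + \<delta>) * \<theta> * \<mu>))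
                 \<and> mgf F \<mu> (- \<theta>) \<le> ennreal (exp (- (1 - \<delta>) * \<theta> * \<mu>))))
          \<or> (\<forall>\<delta>. 0 < \<delta> \<and> \<delta> \<le> 1 \<longrightarrow> (\<exists>tad>0. \<forall>\<mu>>0. \<forall>\<theta>>0. \<theta> * \<mu> \<le> tad \<longrightarrow>
                   mgf F \<mu> \<theta> \<le> ennreal (exp ((1 + \<delta>) * \<theta> * \<mu>))
                 \<and> mgf F \<mu> (- \<theta>) \<le> ennreal (exp (- (1 - \<delta>) * \<theta> * \<mu>))))"
  obtains k where "0 < k"
    and "\<forall>\<mu>. 0 < \<mu> \<longrightarrow> \<mu> \<le> 1 \<longrightarrow> (\<exists>\<theta>\<ge>k. mgf F \<mu> (- \<theta>) \<le> ennreal (exp (- (1 - \<delta>) * \<theta> * \<mu>)))"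
  using B
proof (elim disjE)
  assume "\<forall>\<delta>. 0 < \<delta> \<and> \<delta> \<le> 1 \<longrightarrow> (\<exists>thd>0. \<forall>\<mu>>0. \<forall>\<theta>. 0 \<le> \<theta> \<and> \<theta> \<le> thd \<longrightarrow>
                   mgf F \<mu> \<theta> \<le> ennreal (exp ((1 + \<delta>) * \<theta> * \<mu>))
                 \<and> mgf F \<mu> (- \<theta>) \<le> ennreal (exp (- (1 - \<delta>) * \<theta> * \<mu>)))"
  then obtain thd where "0 < thd" and "\<forall>\<mu>>0. \<forall>\<theta>. 0 \<le> \<theta> \<and> \<theta> \<le> thd \<longrightarrow>
                   mgf F \<mu> \<theta> \<le> ennreal (exp ((1 + \<delta>) * \<theta> * \<mu>))
                 \<and> mgf F \<mu> (- \<theta>) \<le> ennreal (exp (- (1 - \<delta>) * \<theta> * \<mu>))"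
    using \<delta> by auto
  then show ?thesis
    using that[of thd] by force
next
  assume "\<forall>\<delta>. 0 < \<delta> \<and> \<delta> \<le> 1 \<longrightarrow> (\<exists>tad>0. \<forall>\<mu>>0. \<forall>\<theta>>0. \<theta> * \<mu> \<le> tad \<longrightarrow>
                   mgf F \<mu> \<theta> \<le> ennreal (exp ((1 + \<delta>) * \<theta> * \<mu>))
                 \<and> mgf F \<mu> (- \<theta>) \<le> ennreal (exp (- (1 - \<delta>) * \<theta> * \<mu>)))"
  then obtain tad where tad: "0 < tad" and mgf: "\<forall>\<mu>>0. \<forall>\<theta>>0. \<theta> * \<mu> \<le> tad \<longrightarrow>
                   mgf F \<mu> \<theta> \<le> ennreal (exp ((1 + \<delta>) * \<theta> * \<mu>))
                 \<and> mgf F \<mu> (- \<theta>) \<le> ennreal (exp (- (1 - \<delta>) * \<theta> * \<mu>))"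
    using \<delta> by auto
  have "\<exists>\<theta>\<ge>tad. mgf F \<mu> (- \<theta>) \<le> ennreal (exp (- (1 - \<delta>) * \<theta> * \<mu>))" if "0 < \<mu>" "\<mu> \<le> 1" for \<mu>
  proof (intro exI conjI)
    show "tad \<le> tad / \<mu>"
      using that tad by (simp add: field_simps mult_left_le)
    show "mgf F \<mu> (- (tad / \<mu>)) \<le> ennreal (exp (- (1 - \<delta>) * (tad / \<mu>) * \<mu>))"
      using mgf[rule_format, of \<mu> "tad / \<mu>"] that tad by simp
  qed
  then show ?thesis
    using that tad by blast
qed

lemma nn_integral_square_le_mean_plus_fourth_moment:
  fixes N :: "real measure"
  assumes "AE x in N. 0 \<le> x" and "integrable N (\<lambda>x. x)" and "integrable N (\<lambda>x. x ^ 4)"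
  shows "(\<integral>\<^sup>+x. ennreal (x\<^sup>2) \<partial>N) \<le> ennreal ((\<integral>x. x \<partial>N) + (\<integral>x. x ^ 4 \<partial>N))"
proof -
  have "(\<integral>\<^sup>+x. ennreal (x\<^sup>2) \<partial>N) \<le> (\<integral>\<^sup>+x. ennreal (x + x ^ 4) \<partial>N)"
    using assms(1)
  proof (intro nn_integral_mono_AE, eventually_elim)
    case (elim x)
    have "x\<^sup>2 \<le> x + x ^ 4"
    proof (cases "x \<le> 1")
      case True
      then show ?thesis
        using elim by (simp add: power2_eq_square mult_left_le add_increasing2)
    next
      case False
      then show ?thesis
        by (simp add: power_increasing add_increasing)
    qed
    then show ?case
      by (rule ennreal_leI)
  qed
  also have "\<dots> = ennreal (\<integral>x. x + x ^ 4 \<partial>N)"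
    using assms by (intro nn_integral_eq_integral) auto
  finally show ?thesis
    using assms(2,3) by simp
qed

lemma eventually_moments_le:
  fixes F :: "real \<Rightarrow> real measure"
  assumes F_nonneg: "\<forall>\<mu>>0. AE x in F \<mu>. 0 \<le> x"
    and F_int: "\<forall>\<mu>>0. integrable (F \<mu>) (\<lambda>x. x)" and F_mean: "\<forall>\<mu>>0. (\<integral>x. x \<partial>F \<mu>) = \<mu>"
    and int4: "\<forall>\<^sub>F \<mu> in at_right 0. integrable (F \<mu>) (\<lambda>x. x ^ 4)"
    and fourth: "fourth_moment F \<in> O[at_right 0](\<lambda>\<mu>. \<mu>)"
  obtains K where "0 < K"
    and "\<forall>\<^sub>F \<mu> in at_right 0. (\<integral>\<^sup>+x. ennreal (x ^ 4) \<partial>F \<mu>) \<le> ennreal (K * \<mu>)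
                              \<and> (\<integral>\<^sup>+x. ennreal (x\<^sup>2) \<partial>F \<mu>) \<le> ennreal ((1 + K) * \<mu>)"
proof -
  obtain K where K: "0 < K" and le: "\<forall>\<^sub>F \<mu> in at_right 0. norm (fourth_moment F \<mu>) \<le> K * norm \<mu>"
    using fourth by (auto elim: landau_o.bigE)
  have "\<forall>\<^sub>F \<mu> in at_right 0. (\<integral>\<^sup>+x. ennreal (x ^ 4) \<partial>F \<mu>) \<le> ennreal (K * \<mu>)
                              \<and> (\<integral>\<^sup>+x. ennreal (x\<^sup>2) \<partial>F \<mu>) \<le> ennreal ((1 + K) * \<mu>)"
    using int4 le eventually_at_right_less[of 0]
  proof eventually_elim
    case (elim \<mu>)
    have fourth_le: "fourth_moment F \<mu> \<le> K * \<mu>"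
      using elim by simp
    have "(\<integral>\<^sup>+x. ennreal (x ^ 4) \<partial>F \<mu>) = ennreal (fourth_moment F \<mu>)"
      unfolding fourth_moment_def using elim by (intro nn_integral_eq_integral) auto
    moreover have "(\<integral>\<^sup>+x. ennreal (x\<^sup>2) \<partial>F \<mu>) \<le> ennreal (\<mu> + fourth_moment F \<mu>)"
      using nn_integral_square_le_mean_plus_fourth_moment[of "F \<mu>"] F_nonneg F_int F_mean elim
      by (simp add: fourth_moment_def)
    moreover have "ennreal (\<mu> + fourth_moment F \<mu>) \<le> ennreal ((1 + K) * \<mu>)"
      using fourth_le by (intro ennreal_leI) (simp add: algebra_simps)
    ultimately show ?case
      using fourth_le by (auto intro: ennreal_leI order_trans)
  qed
  with K show ?thesis
    using that by blast
qed

lemma mu_ET_uniform_bound: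
  fixes F :: "real \<Rightarrow> real measure"
  assumes F_prob: "\<forall>\<mu>>0. prob_space (F \<mu>)" and F_sets: "\<forall>\<mu>>0. sets (F \<mu>) = sets borel"
    and F_nonneg: "\<forall>\<mu>>0. AE x in F \<mu>. 0 \<le> x"
    and F_int: "\<forall>\<mu>>0. integrable (F \<mu>) (\<lambda>x. x)" and F_mean: "\<forall>\<mu>>0. (\<integral>x. x \<partial>F \<mu>) = \<mu>"
    and \<epsilon>: "0 < \<epsilon>"
    and mgf: "0 < k"
      "\<forall>\<mu>. 0 < \<mu> \<longrightarrow> \<mu> \<le> 1 \<longrightarrow>
         (\<exists>\<theta>\<ge>k. mgf F \<mu> (- \<theta>) \<le> ennreal (exp (- (1 - \<epsilon> / (4 * (1 + \<epsilon>))) * \<theta> * \<mu>)))"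
    and int4: "\<forall>\<^sub>F \<mu> in at_right 0. integrable (F \<mu>) (\<lambda>x. x ^ 4)"
    and fourth: "fourth_moment F \<in> O[at_right 0](\<lambda>\<mu>. \<mu>)"
  obtains B \<xi> where "0 \<le> B" and "0 < \<xi>"
    and "\<And>\<zeta> c n \<mu>. 1 \<le> c \<Longrightarrow> 0 < \<mu> \<Longrightarrow> \<mu> \<le> \<xi> \<Longrightarrow> (1 + \<epsilon>) * \<zeta> \<le> \<mu> \<Longrightarrow>
           0 \<le> \<mu> * ET F \<zeta> c n \<mu> \<and> \<mu> * ET F \<zeta> c n \<mu> \<le> B * c\<^sup>2"
proof -
  define h where "h = \<epsilon> / (2 * (1 + \<epsilon>))"
  have h: "0 < h" "h / 2 = \<epsilon> / (4 * (1 + \<epsilon>))" "1 - 2 * h = 1 / (1 + \<epsilon>)"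
    using \<epsilon> by (simp_all add: h_def field_simps)
  obtain K where K: "0 < K" and moments: "\<forall>\<^sub>F \<mu> in at_right 0.
      (\<integral>\<^sup>+x. ennreal (x ^ 4) \<partial>F \<mu>) \<le> ennreal (K * \<mu>) \<and> (\<integral>\<^sup>+x. ennreal (x\<^sup>2) \<partial>F \<mu>) \<le> ennreal ((1 + K) * \<mu>)"
    using eventually_moments_le[OF F_nonneg F_int F_mean int4 fourth] by blast
  then obtain \<xi> where \<xi>: "0 < \<xi>" and moments_\<xi>: "\<And>\<mu>. 0 < \<mu> \<Longrightarrow> \<mu> < \<xi> \<Longrightarrow>
      (\<integral>\<^sup>+x. ennreal (x ^ 4) \<partial>F \<mu>) \<le> ennreal (K * \<mu>) \<and> (\<integral>\<^sup>+x. ennreal (x\<^sup>2) \<partial>F \<mu>) \<le> ennreal ((1 + K) * \<mu>)"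
    unfolding eventually_at_right_field by auto
  define B where "B = 3 + 2 / (h * k) + 2 * (K + (1 + K)\<^sup>2) / h ^ 4"
  show ?thesis
  proof (rule that)
    show "0 \<le> B"
      using h(1) K mgf(1) by (simp add: B_def)
    show "0 < min (\<xi> / 2) 1"
      using \<xi> by simp
    fix \<zeta> c \<mu> :: real and n :: nat
    assume c: "1 \<le> c" and \<mu>: "0 < \<mu>" "\<mu> \<le> min (\<xi> / 2) 1" and \<zeta>: "(1 + \<epsilon>) * \<zeta> \<le> \<mu>"
    have iid: "iid_real (F \<mu>)"
      using F_prob F_sets \<mu> by (simp add: iid_real_def iid_real_axioms_def)
    have "\<exists>\<theta>\<ge>k. mgf F \<mu> (- \<theta>) \<le> ennreal (exp (- (1 - \<epsilon> / (4 * (1 + \<epsilon>))) * \<theta> * \<mu>))"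
      using mgf(2) \<mu> by simp
    then obtain \<theta> where \<theta>: "k \<le> \<theta>" and mgf_\<theta>: "mgf F \<mu> (- \<theta>) \<le> ennreal (exp (- (1 - h / 2) * \<theta> * \<mu>))"
      unfolding h(2) by blast
    have "\<zeta> \<le> \<mu> / (1 + \<epsilon>)"
      using \<zeta> \<epsilon> by (simp add: pos_le_divide_eq mult.commute)
    then have \<zeta>': "\<zeta> \<le> (1 - 2 * h) * \<mu>"
      unfolding h(3) by simp
    have "\<mu> < \<xi>"
      using \<mu> \<xi> by simp
    then have E4: "(\<integral>\<^sup>+x. ennreal (x ^ 4) \<partial>F \<mu>) \<le> ennreal (K * \<mu>)"
      and E2: "(\<integral>\<^sup>+x. ennreal (x\<^sup>2) \<partial>F \<mu>) \<le> ennreal ((1 + K) * \<mu>)"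
      using moments_\<xi> \<mu> by auto
    have "\<mu> * ET F \<zeta> c n \<mu> \<le> c\<^sup>2 * B"
      unfolding B_def ET_def iidM_def using \<mu> K
      by (intro iid_real.mu_integral_Tc_min_le[OF iid _ _ h(1) c \<zeta>' mgf(1) \<theta> mgf_\<theta>[unfolded mgf_def] _ _ E4 E2]) auto
    moreover have "0 \<le> ET F \<zeta> c n \<mu>"
      by (simp add: ET_def)
    ultimately show "0 \<le> \<mu> * ET F \<zeta> c n \<mu> \<and> \<mu> * ET F \<zeta> c n \<mu> \<le> B * c\<^sup>2"
      using \<mu> by (simp add: mult.commute)
  qed
qed

lemma eventually_mu_ET_bound:
  fixes F :: "real \<Rightarrow> real measure" and c \<zeta> d :: "nat \<Rightarrow> real"
  assumes F_prob: "\<forall>\<mu>>0. prob_space (F \<mu>)" and F_sets: "\<forall>\<mu>>0. sets (F \<mu>) = sets borel"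
    and F_nonneg: "\<forall>\<mu>>0. AE x in F \<mu>. 0 \<le> x"
    and F_int: "\<forall>\<mu>>0. integrable (F \<mu>) (\<lambda>x. x)" and F_mean: "\<forall>\<mu>>0. (\<integral>x. x \<partial>F \<mu>) = \<mu>"
    and \<epsilon>: "0 < \<epsilon>"
    and mgf: "0 < k"
      "\<forall>\<mu>. 0 < \<mu> \<longrightarrow> \<mu> \<le> 1 \<longrightarrow>
         (\<exists>\<theta>\<ge>k. mgf F \<mu> (- \<theta>) \<le> ennreal (exp (- (1 - \<epsilon> / (4 * (1 + \<epsilon>))) * \<theta> * \<mu>)))"
    and int4: "\<forall>\<^sub>F \<mu> in at_right 0. integrable (F \<mu>) (\<lambda>x. x ^ 4)"
    and fourth: "fourth_moment F \<in> O[at_right 0](\<lambda>\<mu>. \<mu>)"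
    and c: "filterlim c at_top sequentially" and \<zeta>: "\<forall>\<^sub>F n in sequentially. 0 < \<zeta> n"
    and d: "d \<longlonglongrightarrow> 0"
  obtains B where "0 \<le> B" and "\<forall>\<^sub>F n in sequentially. \<forall>\<mu>\<in>{(1 + \<epsilon>) * \<zeta> n..d n}.
    0 \<le> \<mu> * ET F (\<zeta> n) (c n) n \<mu> \<and> \<mu> * ET F (\<zeta> n) (c n) n \<mu> \<le> B * (c n)\<^sup>2"
proof -
  obtain B \<xi> where "0 \<le> B" and "0 < \<xi>" and ET_bound: "\<And>\<zeta> c n \<mu>. 1 \<le> c \<Longrightarrow> 0 < \<mu> \<Longrightarrow> \<mu> \<le> \<xi> \<Longrightarrow>
      (1 + \<epsilon>) * \<zeta> \<le> \<mu> \<Longrightarrow> 0 \<le> \<mu> * ET F \<zeta> c n \<mu> \<and> \<mu> * ET F \<zeta> c n \<mu> \<le> B * c\<^sup>2"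
    using mu_ET_uniform_bound[OF F_prob F_sets F_nonneg F_int F_mean \<epsilon> mgf int4 fourth] by blast
  have "\<forall>\<^sub>F n in sequentially. d n < \<xi>"
    using order_tendstoD(2)[OF d \<open>0 < \<xi>\<close>] .
  moreover have "\<forall>\<^sub>F n in sequentially. 1 \<le> c n"
    using c by (simp add: filterlim_at_top)
  ultimately have "\<forall>\<^sub>F n in sequentially. \<forall>\<mu>\<in>{(1 + \<epsilon>) * \<zeta> n..d n}.
      0 \<le> \<mu> * ET F (\<zeta> n) (c n) n \<mu> \<and> \<mu> * ET F (\<zeta> n) (c n) n \<mu> \<le> B * (c n)\<^sup>2"
    using \<zeta>
  proof eventually_elim
    case (elim n)
    then have "0 < (1 + \<epsilon>) * \<zeta> n"
      using \<epsilon> by simp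
    then show ?case
      using elim by (auto intro!: ET_bound[THEN conjunct1] ET_bound[THEN conjunct2])
  qed
  with \<open>0 \<le> B\<close> show ?thesis
    using that by blast
qed

section \<open>Positivity of the threshold\<close>

lemma mean_le_cond_mean:
  assumes "prob_space (F \<mu>)" and "sets (F \<mu>) = sets borel" and "AE x in F \<mu>. 0 \<le> x"
    and "(\<integral>x. x \<partial>F \<mu>) = \<mu>" and "0 < \<mu>" and "0 < measure (F \<mu>) {0<..}"
  shows "\<mu> \<le> cond_mean F \<mu>"
proof -
  interpret prob_space "F \<mu>"
    by fact
  have "(\<integral>x. x * indicator {0<..} x \<partial>F \<mu>) = (\<integral>x. x \<partial>F \<mu>)"
  proof (rule integral_cong_AE)
    show "AE x in F \<mu>. x * indicator {0<..} x = x"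
      using assms(3) by eventually_elim (auto simp: indicator_def)
  qed (simp_all add: measurable_cong_sets[OF assms(2) refl])
  then have "cond_mean F \<mu> = \<mu> / prob {0<..}"
    unfolding cond_mean_def assms(4) by simp
  moreover have "\<mu> / 1 \<le> \<mu> / prob {0<..}"
    using assms(5,6) prob_le_1[of "{0<..}"] by (intro divide_left_mono) auto
  ultimately show ?thesis
    by simp
qed

lemma set_integral_mult_density_pos:
  fixes f g :: "real \<Rightarrow> real"
  assumes g_nonneg: "\<forall>\<mu>>0. g \<mu> \<ge> 0" and g_total: "(LBINT \<mu>:{0<..}. g \<mu>) = 1"
    and int: "set_integrable lborel {0<..} (\<lambda>\<mu>. f \<mu> * g \<mu>)" and f_pos: "\<And>\<mu>. 0 < \<mu> \<Longrightarrow> 0 < f \<mu>"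
  shows "0 < (LBINT \<mu>:{0<..}. f \<mu> * g \<mu>)"
proof -
  let ?h = "\<lambda>\<mu>::real. indicator {0<..} \<mu> *\<^sub>R (f \<mu> * g \<mu>)"
  have h_nonneg: "0 \<le> ?h \<mu>" for \<mu>
    using f_pos[of \<mu>] g_nonneg by (auto simp: indicator_def)
  have "integral\<^sup>L lborel ?h \<noteq> 0"
  proof
    assume "integral\<^sup>L lborel ?h = 0"
    then have "AE \<mu> in lborel. ?h \<mu> = 0"
      using integral_nonneg_eq_0_iff_AE[of lborel ?h] int h_nonneg by (simp add: set_integrable_def)
    then have "AE \<mu> in lborel. indicator {0<..} \<mu> *\<^sub>R g \<mu> = 0"
      by eventually_elim (auto simp: indicator_def dest: f_pos split: if_splits)
    then have "(LBINT \<mu>:{0<..}. g \<mu>) = 0"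
      unfolding set_lebesgue_integral_def by (rule integral_eq_zero_AE)
    with g_total show False
      by simp
  qed
  moreover have "0 \<le> integral\<^sup>L lborel ?h"
    using h_nonneg by simp
  ultimately show ?thesis
    unfolding set_lebesgue_integral_def by simp
qed

lemma integral_cond_mean_pos:
  fixes g :: "real \<Rightarrow> real" and F :: "real \<Rightarrow> real measure"
  assumes F_prob: "\<forall>\<mu>>0. prob_space (F \<mu>)" and F_sets: "\<forall>\<mu>>0. sets (F \<mu>) = sets borel"
    and F_nonneg: "\<forall>\<mu>>0. AE x in F \<mu>. 0 \<le> x" and F_mean: "\<forall>\<mu>>0. (\<integral>x. x \<partial>F \<mu>) = \<mu>"
    and A2: "\<exists>a1>0. \<forall>\<mu>>0. measure (F \<mu>) {0<..} \<ge> a1 * min \<mu> 1"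
    and g_nonneg: "\<forall>\<mu>>0. g \<mu> \<ge> 0" and g_total: "(LBINT \<mu>:{0<..}. g \<mu>) = 1"
    and lam_int: "set_integrable lborel {0<..} (\<lambda>\<mu>. cond_mean F \<mu> * g \<mu>)"
  shows "0 < (LBINT \<mu>:{0<..}. cond_mean F \<mu> * g \<mu>)"
proof (rule set_integral_mult_density_pos[OF g_nonneg g_total lam_int])
  fix \<mu> :: real
  assume \<mu>: "0 < \<mu>"
  obtain a1 where "0 < a1" and "\<forall>\<mu>>0. measure (F \<mu>) {0<..} \<ge> a1 * min \<mu> 1"
    using A2 by blast
  then have "0 < measure (F \<mu>) {0<..}"
    using \<mu> by (meson less_le_trans min_less_iff_conj mult_pos_pos zero_less_one)
  then have "\<mu> \<le> cond_mean F \<mu>"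
    using F_prob F_sets F_nonneg F_mean \<mu> by (intro mean_le_cond_mean) auto
  then show "0 < cond_mean F \<mu>"
    using \<mu> by simp
qed

lemma eventually_pos_of_asymp_equiv_powr:
  fixes \<zeta> :: "nat \<Rightarrow> real"
  assumes "0 < C" and "\<zeta> \<sim>[sequentially] (\<lambda>n. C * real n powr p)"
  shows "\<forall>\<^sub>F n in sequentially. 0 < \<zeta> n"
proof -
  have "\<forall>\<^sub>F n in sequentially. 0 < C * real n powr p"
    using assms(1) by (intro eventually_mono[OF eventually_gt_at_top[of 0]]) simp
  then show ?thesis
    using asymp_equiv_eventually_pos_iff[OF assms(2)] by eventually_elim simp
qed

section \<open>Asymptotics in \<open>n\<close>\<close>

text \<open>For reals, \<open>Sup {}\<close> is an unspecified value, hence the second hypothesis.\<close>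
lemma abs_SUP_le:
  fixes f :: "'a \<Rightarrow> real"
  assumes bound: "\<forall>x\<in>A. 0 \<le> f x \<and> f x \<le> b" and "\<bar>Sup {}\<bar> \<le> b"
  shows "\<bar>SUP x\<in>A. f x\<bar> \<le> b"
proof (cases "A = {}")
  case False
  then obtain x where x: "x \<in> A"
    by blast
  have "0 \<le> f x"
    using bound x by simp
  also have "f x \<le> (SUP x\<in>A. f x)"
    using bound x by (intro cSUP_upper bdd_aboveI2[where M = b]) auto
  finally have "0 \<le> (SUP x\<in>A. f x)" .
  moreover have "(SUP x\<in>A. f x) \<le> b"
    using bound False by (intro cSUP_least) auto
  ultimately show ?thesis
    by simp
qed (use assms(2) in simp)

lemma SUP_in_bigo_cube:
  fixes f :: "nat \<Rightarrow> real \<Rightarrow> real" and c :: "nat \<Rightarrow> real" and I :: "nat \<Rightarrow> real set"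
  assumes c: "filterlim c at_top sequentially" and B: "0 \<le> B"
    and bound: "\<forall>\<^sub>F n in sequentially. \<forall>\<mu>\<in>I n. 0 \<le> f n \<mu> \<and> f n \<mu> \<le> B * (c n)\<^sup>2"
  shows "(\<lambda>n. SUP \<mu>\<in>I n. f n \<mu>) \<in> O(\<lambda>n. (c n) ^ 3 + ln (real n))"
proof (rule bigoI[where c = "B + 1"])
  have "\<forall>\<^sub>F n in sequentially. max 1 \<bar>Sup ({}::real set)\<bar> \<le> c n"
    using c unfolding filterlim_at_top by blast
  then show "\<forall>\<^sub>F n in sequentially. norm (SUP \<mu>\<in>I n. f n \<mu>) \<le> (B + 1) * norm ((c n) ^ 3 + ln (real n))"
    using bound eventually_ge_at_top[of "1::nat"]
  proof eventually_elim
    case (elim n)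
    then have c1: "1 \<le> c n" and ln: "0 \<le> ln (real n)"
      by auto
    have c3: "(c n)\<^sup>2 \<le> (c n) ^ 3" "c n \<le> (c n) ^ 3"
      using c1 power_increasing[of 1 3 "c n"] power_increasing[of 2 3 "c n"] by auto
    have B_c: "B * (c n)\<^sup>2 \<le> (B + 1) * (c n) ^ 3"
      using B c3 by (intro mult_mono) auto
    have "1 * (c n) ^ 3 \<le> (B + 1) * (c n) ^ 3"
      using B c1 by (intro mult_right_mono) auto
    then have "c n \<le> (B + 1) * (c n) ^ 3"
      using c3 by linarith
    then have Sup_c: "\<bar>Sup ({}::real set)\<bar> \<le> (B + 1) * (c n) ^ 3"
      using elim(1) by linarith
    have "\<bar>SUP \<mu>\<in>I n. f n \<mu>\<bar> \<le> (B + 1) * (c n) ^ 3"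
      using elim(2) B_c Sup_c by (intro abs_SUP_le) (auto dest: order_trans)
    also have "\<dots> \<le> (B + 1) * norm ((c n) ^ 3 + ln (real n))"
      using B c1 ln by (intro mult_left_mono) auto
    finally show ?case
      by simp
  qed
qed

lemma nn_integral_weighted_tendsto_0:
  fixes g :: "real \<Rightarrow> real" and f :: "nat \<Rightarrow> real \<Rightarrow> real" and a c d :: "nat \<Rightarrow> real"
  assumes \<beta>: "0 < \<beta>" and \<omega>: "0 < \<omega>" and d: "\<forall>n. d n = real n powr (- \<omega>)"
    and g: "g \<in> O[at_right 0](\<lambda>\<mu>. \<mu> powr (\<beta> - 1))"
    and c: "c \<in> o(\<lambda>n. real n powr (\<omega> * \<beta> / 2))"
    and B: "0 \<le> B"
    and a: "\<forall>\<^sub>F n in sequentially. 0 < a n"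
    and bound: "\<forall>\<^sub>F n in sequentially. \<forall>\<mu>\<in>{a n..d n}. 0 \<le> f n \<mu> \<and> f n \<mu> \<le> B * (c n)\<^sup>2"
  shows "((\<lambda>n. \<integral>\<^sup>+\<mu>. ennreal (indicator {a n..d n} \<mu> * g \<mu> * f n \<mu>) \<partial>lborel) \<longlongrightarrow> 0) sequentially"
proof -
  obtain G where G: "0 < G" and "\<forall>\<^sub>F \<mu> in at_right 0. norm (g \<mu>) \<le> G * norm (\<mu> powr (\<beta> - 1))"
    using g by (auto elim: landau_o.bigE)
  then obtain \<xi> where \<xi>: "0 < \<xi>" and g_le: "\<And>\<mu>. 0 < \<mu> \<Longrightarrow> \<mu> < \<xi> \<Longrightarrow> \<bar>g \<mu>\<bar> \<le> G * \<mu> powr (\<beta> - 1)"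
    unfolding eventually_at_right_field by auto
  have "(\<lambda>n. real n powr (- \<omega>)) \<longlonglongrightarrow> 0"
    using \<omega> by (intro tendsto_neg_powr filterlim_real_sequentially) simp
  then have d_small: "\<forall>\<^sub>F n in sequentially. d n < \<xi>"
    using \<xi> d by (simp add: order_tendstoD(2))
  define u where "u n = G * B / \<beta> * (c n / real n powr (\<omega> * \<beta> / 2))\<^sup>2" for n
  have "(\<lambda>n. (c n / real n powr (\<omega> * \<beta> / 2))\<^sup>2) \<longlonglongrightarrow> 0"
    using tendsto_power[OF smalloD_tendsto[OF c], of 2] by simp
  then have u_lim: "u \<longlonglongrightarrow> 0"
    unfolding u_def by (rule tendsto_mult_right_zero)
  have le_u: "\<forall>\<^sub>F n in sequentially.
      (\<integral>\<^sup>+\<mu>. ennreal (indicator {a n..d n} \<mu> * g \<mu> * f n \<mu>) \<partial>lborel) \<le> ennreal (u n)"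
    using a bound d_small eventually_gt_at_top[of "0::nat"]
  proof eventually_elim
    case (elim n)
    have "g \<mu> * f n \<mu> \<le> G * B * (c n)\<^sup>2 * \<mu> powr (\<beta> - 1)" if "\<mu> \<in> {a n..d n}" for \<mu>
    proof -
      have \<mu>: "0 < \<mu>" "\<mu> < \<xi>" and f: "0 \<le> f n \<mu>" "f n \<mu> \<le> B * (c n)\<^sup>2"
        using that elim by auto
      have "g \<mu> * f n \<mu> \<le> \<bar>g \<mu>\<bar> * f n \<mu>"
        using f by (intro mult_right_mono) auto
      also have "\<dots> \<le> (G * \<mu> powr (\<beta> - 1)) * (B * (c n)\<^sup>2)"
        using g_le[OF \<mu>] f by (intro mult_mono) auto
      finally show ?thesis
        by (simp add: mult_ac)
    qed
    then have "(\<integral>\<^sup>+\<mu>. ennreal (indicator {a n..d n} \<mu> * g \<mu> * f n \<mu>) \<partial>lborel)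
        \<le> ennreal (G * B * (c n)\<^sup>2 * (d n powr \<beta> / \<beta>))"
      unfolding mult.assoc[of "indicator _ _"] using \<beta> elim G B
      by (intro nn_integral_Icc_le_powr) auto
    also have "G * B * (c n)\<^sup>2 * (d n powr \<beta> / \<beta>) = u n"
    proof -
      have "d n powr \<beta> = real n powr (- (\<omega> * \<beta>))"
        unfolding d[rule_format] powr_powr by simp
      then have d_powr: "d n powr \<beta> = 1 / real n powr (\<omega> * \<beta>)"
        by (simp add: powr_minus_divide)
      have n_powr: "(real n powr (\<omega> * \<beta> / 2))\<^sup>2 = real n powr (\<omega> * \<beta>)"
        by (simp add: power2_eq_square powr_add[symmetric] mult.commute)
      show ?thesis
        unfolding u_def power_divide d_powr n_powr by simp
    qed
    finally show ?case .
  qed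
  have "((\<lambda>n. ennreal (u n)) \<longlongrightarrow> 0) sequentially"
    using tendsto_ennrealI[OF u_lim] by simp
  then show ?thesis
    by (intro tendsto_sandwich[OF _ le_u tendsto_const]) simp
qed

theorem lemma6:
  fixes g :: "real \<Rightarrow> real" and F :: "real \<Rightarrow> real measure"
    and \<alpha> \<beta> lam C \<omega> \<epsilon> :: real
    and c \<zeta> d :: "nat \<Rightarrow> real"
  assumes g_nonneg: "\<forall>\<mu>>0. g \<mu> \<ge> 0"
    and g_int: "set_integrable lborel {0<..} g"
    and g_total: "(LBINT \<mu>:{0<..}. g \<mu>) = 1"
    and F_prob: "\<forall>\<mu>>0. prob_space (F \<mu>)"
    and F_sets: "\<forall>\<mu>>0. sets (F \<mu>) = sets borel"
    and F_nonneg: "\<forall>\<mu>>0. AE x in F \<mu>. 0 \<le> x"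
    and F_int: "\<forall>\<mu>>0. integrable (F \<mu>) (\<lambda>x. x)"
    and F_mean: "\<forall>\<mu>>0. (\<integral>x. x \<partial>F \<mu>) = \<mu>"
    and lam_int: "set_integrable lborel {0<..} (\<lambda>\<mu>. cond_mean F \<mu> * g \<mu>)"
    and lam_def: "lam = (LBINT \<mu>:{0<..}. cond_mean F \<mu> * g \<mu>)"
    and A1: "\<alpha> > 0" "\<beta> > 0" "g \<sim>[at_right 0] (\<lambda>\<mu>. \<alpha> * \<mu> powr (\<beta> - 1))"
    and A2: "\<exists>a1>0. \<forall>\<mu>>0. measure (F \<mu>) {0<..} \<ge> a1 * min \<mu> 1"
    and B: "(\<forall>\<mu>>0. AE x in F \<mu>. x \<in> \<nat>)
             \<and> (\<forall>\<delta>. 0 < \<delta> \<and> \<delta> \<le> 1 \<longrightarrow> (\<exists>thd>0. \<forall>\<mu>>0. \<forall>\<theta>. 0 \<le> \<theta> \<and> \<theta> \<le> thd \<longrightarrow>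
                   mgf F \<mu> \<theta> \<le> ennreal (exp ((1 + \<delta>) * \<theta> * \<mu>))
                 \<and> mgf F \<mu> (- \<theta>) \<le> ennreal (exp (- (1 - \<delta>) * \<theta> * \<mu>))))
             \<and> (\<exists>a2>0. \<forall>\<mu>>0. measure (F \<mu>) {0<..} \<le> a2 * \<mu>)
             \<and> (\<forall>\<^sub>F \<mu> in at_right 0. integrable (F \<mu>) (\<lambda>x. x ^ 4))
             \<and> fourth_moment F \<in> O[at_right 0](\<lambda>\<mu>. \<mu>)
           \<or>
             (\<forall>\<mu>>0. \<forall>x. measure (F \<mu>) {x} = 0)
             \<and> ((\<lambda>\<gamma>. SUP \<mu>\<in>{0<..}. measure (F \<mu>) {..\<gamma> * \<mu>}) \<longlongrightarrow> 0) (at_right 0)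
             \<and> (\<forall>\<^sub>F \<mu> in at_right 0. integrable (F \<mu>) (\<lambda>x. x ^ 4))
             \<and> fourth_moment F \<in> O[at_right 0](\<lambda>\<mu>. \<mu>)
             \<and> (\<forall>\<delta>. 0 < \<delta> \<and> \<delta> \<le> 1 \<longrightarrow> (\<exists>tad>0. \<forall>\<mu>>0. \<forall>\<theta>>0. \<theta> * \<mu> \<le> tad \<longrightarrow>
                   mgf F \<mu> \<theta> \<le> ennreal (exp ((1 + \<delta>) * \<theta> * \<mu>))
                 \<and> mgf F \<mu> (- \<theta>) \<le> ennreal (exp (- (1 - \<delta>) * \<theta> * \<mu>))))
             \<and> (\<forall>t::nat. t \<ge> 1 \<longrightarrow> (\<exists>\<xi>>0.
                   ((\<lambda>\<gamma>. SUP \<mu>\<in>{0<..\<xi>}. measure (iidM F \<mu>) {w. sigma2 w t \<le> \<gamma> * \<mu>\<^sup>2})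
                      \<longlongrightarrow> 0) (at_right 0)))"
    and c_lim: "filterlim c at_top sequentially"
    and c_small: "\<forall>\<delta>>0. c \<in> o(\<lambda>n. real n powr \<delta>)"
    and C_def: "C = (lam * \<beta> * (\<beta> + 1) / \<alpha>) powr (1 / (\<beta> + 1))"
    and zeta_asym: "\<zeta> \<sim>[sequentially] (\<lambda>n. C * real n powr (- 1 / (\<beta> + 1)))"
    and omega: "0 < \<omega>" "\<omega> < 1 / (\<beta> + 1)"
    and d_def: "\<forall>n. d n = real n powr (- \<omega>)"
    and eps: "\<epsilon> > 0"
  shows "((\<lambda>n. SUP \<mu>\<in>{(1 + \<epsilon>) * \<zeta> n .. d n}. \<mu> * ET F (\<zeta> n) (c n) n \<mu>)
           \<in> O(\<lambda>n. (c n) ^ 3 + ln (real n)))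
         \<and> ((\<lambda>n. \<integral>\<^sup>+\<mu>. ennreal (indicator {(1 + \<epsilon>) * \<zeta> n .. d n} \<mu> * g \<mu> * \<mu>
                                  * ET F (\<zeta> n) (c n) n \<mu>) \<partial>lborel) \<longlongrightarrow> 0) sequentially"
proof -
  define \<delta> where "\<delta> = \<epsilon> / (4 * (1 + \<epsilon>))"
  have \<delta>: "0 < \<delta>" "\<delta> \<le> 1"
    using eps by (simp_all add: \<delta>_def field_simps)
  obtain k where k: "0 < k" and lower_mgf: "\<forall>\<mu>. 0 < \<mu> \<longrightarrow> \<mu> \<le> 1 \<longrightarrow>
      (\<exists>\<theta>\<ge>k. mgf F \<mu> (- \<theta>) \<le> ennreal (exp (- (1 - \<delta>) * \<theta> * \<mu>)))"
    by (rule uniform_lower_mgf[OF \<delta> disj_forward[OF B]]; (elim conjE)?; assumption)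
  have moments: "\<forall>\<^sub>F \<mu> in at_right 0. integrable (F \<mu>) (\<lambda>x. x ^ 4)" "fourth_moment F \<in> O[at_right 0](\<lambda>\<mu>. \<mu>)"
    using B by blast+
  have "0 < C"
    using integral_cond_mean_pos[OF F_prob F_sets F_nonneg F_mean A2 g_nonneg g_total lam_int] A1
    unfolding C_def lam_def[symmetric] by simp
  then have \<zeta>_pos: "\<forall>\<^sub>F n in sequentially. 0 < \<zeta> n"
    by (rule eventually_pos_of_asymp_equiv_powr[OF _ zeta_asym])
  have "d = (\<lambda>n. real n powr (- \<omega>))"
    using d_def by (simp add: fun_eq_iff)
  then have "d \<longlonglongrightarrow> 0"
    using omega(1) by (auto intro!: tendsto_neg_powr filterlim_real_sequentially)
  then obtain Bd where "0 \<le> Bd" and bound: "\<forall>\<^sub>F n in sequentially. \<forall>\<mu>\<in>{(1 + \<epsilon>) * \<zeta> n..d n}.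
      0 \<le> \<mu> * ET F (\<zeta> n) (c n) n \<mu> \<and> \<mu> * ET F (\<zeta> n) (c n) n \<mu> \<le> Bd * (c n)\<^sup>2"
    using eventually_mu_ET_bound[OF F_prob F_sets F_nonneg F_int F_mean eps k
        lower_mgf[unfolded \<delta>_def] moments c_lim \<zeta>_pos] by blast
  have "\<forall>\<^sub>F n in sequentially. 0 < (1 + \<epsilon>) * \<zeta> n"
    using \<zeta>_pos eps by (auto elim: eventually_mono)
  moreover have "g \<in> O[at_right 0](\<lambda>\<mu>. \<mu> powr (\<beta> - 1))"
    using asymp_equiv_imp_bigo[OF A1(3)] A1(1) by simp
  moreover have "c \<in> o(\<lambda>n. real n powr (\<omega> * \<beta> / 2))"
    using c_small omega(1) A1(2) by simp
  ultimately show ?thesis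
    using SUP_in_bigo_cube[OF c_lim \<open>0 \<le> Bd\<close> bound]
      nn_integral_weighted_tendsto_0[OF A1(2) omega(1) d_def _ _ \<open>0 \<le> Bd\<close> _ bound]
    by (simp add: mult.assoc)
qed

end
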